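(* Let $\mathcal C$ be a sub-$\sigma$-algebra of $\mathcal F$, let $G(y;\omega)$ be a regular conditional distribution function of $X_1$ given $\mathcal C$ (so $G(\cdot;\omega)$ is a distribution function for each $\omega$ and $G(y;\cdot)=P(X_1\le y\mid\mathcal C)$ a.s.), and let $g(y)=P(\{\omega:G(y;\omega)=1\})$, $y\in\mathbb{R}$. If $g(\xi_p)<p$, then there exist $\delta,\varepsilon\in(0,1)$ such that for all $t\in\mathbb{R}$, $$\sup_{|y-\xi_p|\le\delta}E\big|E\{\exp(\iota tI(X_1\le y))\mid\mathcal C\}\big|\le1-(1-|\Psi_\varepsilon(t)|)\delta,$$ where $\Psi_a(t)=ae^{\iota t}+1-a$ for $a\in(0,1)$.
   Context: $X_1$ is a real random variable on $(\Omega,\mathcal F,P)$ with distribution function $F$; $p\in(0,1)$, $\xi_p=F^{-1}(p)=\inf\{x:F(x)\ge p\}$, and $F$ is continuous at $\xi_p$ (so $F(\xi_p)=p$). $\iota=\sqrt{-1}$, and $I(\cdot)$ denotes the indicator function. *)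

theory Defs
  imports "HOL-Probability.Probability"
begin

definition complex_cond_exp :: "'a measure \<Rightarrow> 'a measure \<Rightarrow> ('a \<Rightarrow> complex) \<Rightarrow> 'a \<Rightarrow> complex" where
  "complex_cond_exp M F f = (\<lambda>\<omega>. Complex (real_cond_exp M F (\<lambda>x. Re (f x)) \<omega>)
                                              (real_cond_exp M F (\<lambda>x. Im (f x)) \<omega>))"

definition Psi :: "real \<Rightarrow> real \<Rightarrow> complex" where
  "Psi a t = complex_of_real a * exp (\<i> * complex_of_real t) + 1 - complex_of_real a"

end

theory Submission
  imports Defs
begin

(* Write V_y = G(y; .) for the conditional distribution function of X_1 at y.  Because
   exp(i t I) = 1 + (e^{it} - 1) I for an indicator I, the conditional characteristic function
   of I(X_1 <= y) given C is Psi_{V_y}(t) almost surely, and |Psi_a(t)| <= |Psi_eps(t)| <= 1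
   whenever eps <= a <= 1 - eps.  So E|E{exp(i t I(X_1 <= y)) | C}| <= 1 - (1 - |Psi_eps(t)|) delta
   as soon as P(eps <= V_y <= 1 - eps) >= delta, and it suffices to find delta, eps for which
   this holds uniformly in |y - xi_p| <= delta.
   Since E V_xi = F(xi_p) >= p > P(V_xi = 1), the variable V_xi puts mass into a band [a, 1 - a].
   By continuity of F at xi_p, V_{xi+delta} - V_{xi-delta} has small mean, so by a Markov
   argument the band [a/2, 1 - a/2] still contains both V_{xi-delta} and V_{xi+delta}, hence
   every V_y with |y - xi_p| <= delta, with probability at least delta. *)

(* At the p-quantile a distribution function has reached level p; this only uses
   right-continuity of the cdf. *)
lemma cdf_at_quantile:
  assumes "real_distribution D" and "0 < p" and "p < 1"
  shows "p \<le> cdf D (Inf {x. cdf D x \<ge> p})"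
proof -
  interpret D: real_distribution D by fact
  define \<xi> where "\<xi> = Inf {x. cdf D x \<ge> p}"
  obtain x0 where "cdf D x0 > p"
    using eventually_happens'[OF _ order_tendstoD(1)[OF D.cdf_lim_at_top_prob]] assms(3) by force
  then have nonempty: "{x. cdf D x \<ge> p} \<noteq> {}" by (auto intro!: exI[of _ x0])
  have "\<forall>\<^sub>F x in at_right \<xi>. p \<le> cdf D x"
    using eventually_at_right_less
  proof (rule eventually_mono)
    fix x assume "\<xi> < x"
    then obtain s where "p \<le> cdf D s" "s < x"
      using cInf_lessD[OF nonempty] unfolding \<xi>_def by blast
    then show "p \<le> cdf D x" using D.cdf_nondecreasing[of s x] by linarith
  qed
  moreover have "(cdf D \<longlongrightarrow> cdf D \<xi>) (at_right \<xi>)"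
    using D.cdf_is_right_cont by (simp add: continuous_within)
  ultimately show ?thesis
    unfolding \<xi>_def[symmetric] by (intro tendsto_lowerbound) auto
qed

lemma cdf_distr:
  assumes "X \<in> borel_measurable M"
  shows "cdf (distr M borel X) y = measure M {\<omega>\<in>space M. X \<omega> \<le> y}"
  unfolding cdf_def using assms
  by (subst measure_distr) (auto intro!: arg_cong[where f="measure M"])

lemma distribution_function_bounds:
  fixes f :: "real \<Rightarrow> real"
  assumes "mono f" and "(f \<longlongrightarrow> 0) at_bot" and "(f \<longlongrightarrow> 1) at_top"
  shows "0 \<le> f y" and "f y \<le> 1"
proof -
  show "0 \<le> f y"
    by (rule tendsto_le[OF trivial_limit_at_bot_linorder tendsto_const assms(2)])
       (auto simp: eventually_at_bot_linorder intro!: exI[of _ y] monoD[OF assms(1)])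
  show "f y \<le> 1"
    by (rule tendsto_le[OF trivial_limit_at_top_linorder assms(3) tendsto_const])
       (auto simp: eventually_at_top_linorder intro!: exI[of _ y] monoD[OF assms(1)])
qed

lemma isCont_small_window_increment:
  fixes F :: "real \<Rightarrow> real"
  assumes "isCont F \<xi>" and "0 < r" and "0 < b"
  obtains \<delta> where "0 < \<delta>" and "\<delta> \<le> b" and "F (\<xi> + \<delta>) - F (\<xi> - \<delta>) < r"
proof -
  have "\<forall>e>0. \<exists>d>0. \<forall>x. \<bar>x - \<xi>\<bar> < d \<longrightarrow> \<bar>F x - F \<xi>\<bar> < e"
    using assms(1) unfolding continuous_at_eps_delta dist_real_def .
  then obtain d where "0 < d" and d: "\<forall>x. \<bar>x - \<xi>\<bar> < d \<longrightarrow> \<bar>F x - F \<xi>\<bar> < r / 2"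
    using half_gt_zero[OF \<open>0 < r\<close>] by blast
  define \<delta> where "\<delta> = min (d / 2) b"
  have "0 < \<delta>" "\<delta> \<le> b" "\<delta> < d" using \<open>0 < d\<close> \<open>0 < b\<close> by (auto simp: \<delta>_def)
  moreover have "\<bar>F (\<xi> + \<delta>) - F \<xi>\<bar> < r / 2" "\<bar>F (\<xi> - \<delta>) - F \<xi>\<bar> < r / 2"
    using d \<open>0 < \<delta>\<close> \<open>\<delta> < d\<close> by auto
  ultimately have "F (\<xi> + \<delta>) - F (\<xi> - \<delta>) < r" by arith
  with \<open>0 < \<delta>\<close> \<open>\<delta> \<le> b\<close> show ?thesis by (rule that)
qed

(* Algebra of Psi_a(t) = a e^{it} + 1 - a: its modulus is computed from
   |Psi_a(t)|^2 = 1 - 2 a (1 - a) (1 - cos t), which is at most 1 for a in [0, 1] and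
   decreases as a moves towards 1/2. *)
lemma Psi_Re: "Re (Psi a t) = a * cos t + 1 - a"
  by (simp add: Psi_def cis_conv_exp[symmetric])

lemma Psi_Im: "Im (Psi a t) = a * sin t"
  by (simp add: Psi_def cis_conv_exp[symmetric])

lemma norm_Psi_squared: "(cmod (Psi a t))\<^sup>2 = 1 - 2 * (a * (1 - a)) * (1 - cos t)"
proof -
  have "(cmod (Psi a t))\<^sup>2 = (a * cos t + 1 - a)\<^sup>2 + (a * sin t)\<^sup>2"
    by (simp add: cmod_power2 Psi_Re Psi_Im)
  also have "\<dots> = 1 - 2 * (a * (1 - a)) * (1 - cos t)"
    using sin_squared_eq[of t] by (simp add: power_mult_distrib) (simp add: algebra_simps power2_eq_square)
  finally show ?thesis .
qed

lemma norm_Psi_le_1: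
  assumes "0 \<le> a" and "a \<le> 1"
  shows "cmod (Psi a t) \<le> 1"
proof (rule power2_le_imp_le)
  have "0 \<le> 2 * (a * (1 - a)) * (1 - cos t)" using assms by simp
  then show "(cmod (Psi a t))\<^sup>2 \<le> 1\<^sup>2" by (simp add: norm_Psi_squared)
qed simp

lemma norm_Psi_mono:
  assumes "e \<le> a" and "a \<le> 1 - e"
  shows "cmod (Psi a t) \<le> cmod (Psi e t)"
proof (rule power2_le_imp_le)
  have "e * (1 - e) \<le> a * (1 - a)"
    using mult_nonneg_nonneg[of "a - e" "1 - a - e"] assms by (simp add: algebra_simps)
  then have "2 * (e * (1 - e)) * (1 - cos t) \<le> 2 * (a * (1 - a)) * (1 - cos t)"
    by (intro mult_right_mono) auto
  then show "(cmod (Psi a t))\<^sup>2 \<le> (cmod (Psi e t))\<^sup>2" by (simp add: norm_Psi_squared)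
qed simp

lemma (in finite_measure) integrable_indicator_finite:
  "A \<in> sets M \<Longrightarrow> integrable M (indicator A :: 'a \<Rightarrow> real)"
  by (intro integrable_real_indicator) (auto simp: less_top[symmetric])

(* Conditional characteristic function of the indicator of an event Q: since
   exp(i t I) = 1 + (cos t - 1) I + i sin t I for I in {0, 1}, linearity of conditional
   expectation gives Psi evaluated at the conditional probability of Q. *)
lemma (in finite_measure_subalgebra) complex_cond_exp_exp_indicator:
  assumes [measurable]: "{x\<in>space M. Q x} \<in> sets M"
  shows "AE \<omega> in M. complex_cond_exp M F (\<lambda>x. exp (\<i> * complex_of_real t * (if Q x then 1 else 0))) \<omega>
           = Psi (real_cond_exp M F (indicator {x\<in>space M. Q x}) \<omega>) t"
proof -
  define I where "I = (indicator {x\<in>space M. Q x} :: 'a \<Rightarrow> real)"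
  have [measurable]: "I \<in> borel_measurable M" unfolding I_def by measurable
  have int_I: "integrable M I"
    unfolding I_def using assms by (rule integrable_indicator_finite)
  have "AE x in M. real_cond_exp M F (\<lambda>x. 1) x = 1"
    by (rule real_cond_exp_F_meas) auto
  moreover have "AE x in M. real_cond_exp M F (\<lambda>x. Re (exp (\<i> * complex_of_real t * (if Q x then 1 else 0)))) x
                   = real_cond_exp M F (\<lambda>x. 1 + (cos t - 1) * I x) x"
    by (rule real_cond_exp_cong) (auto simp: I_def Re_exp intro!: AE_I2)
  moreover have "AE x in M. real_cond_exp M F (\<lambda>x. 1 + (cos t - 1) * I x) x
                   = real_cond_exp M F (\<lambda>x. 1) x + real_cond_exp M F (\<lambda>x. (cos t - 1) * I x) x"
    by (rule real_cond_exp_add) (auto intro: int_I)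
  moreover have "AE x in M. real_cond_exp M F (\<lambda>x. (cos t - 1) * I x) x = (cos t - 1) * real_cond_exp M F I x"
    by (rule real_cond_exp_cmult[OF int_I])
  moreover have "AE x in M. real_cond_exp M F (\<lambda>x. Im (exp (\<i> * complex_of_real t * (if Q x then 1 else 0)))) x
                   = real_cond_exp M F (\<lambda>x. sin t * I x) x"
    by (rule real_cond_exp_cong) (auto simp: I_def Im_exp intro!: AE_I2)
  moreover have "AE x in M. real_cond_exp M F (\<lambda>x. sin t * I x) x = sin t * real_cond_exp M F I x"
    by (rule real_cond_exp_cmult[OF int_I])
  ultimately show ?thesis
    by eventually_elim (simp add: complex_cond_exp_def complex_eq_iff Psi_Re Psi_Im I_def algebra_simps)
qed

lemma (in finite_measure_subalgebra) integral_norm_cond_char_indicator: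
  assumes [measurable]: "{x\<in>space M. Q x} \<in> sets M" "H \<in> borel_measurable M"
    and H: "AE \<omega> in M. H \<omega> = real_cond_exp M F (indicator {x\<in>space M. Q x}) \<omega>"
  shows "integral\<^sup>L M (\<lambda>\<omega>. cmod (complex_cond_exp M F
             (\<lambda>x. exp (\<i> * complex_of_real t * (if Q x then 1 else 0))) \<omega>))
         = integral\<^sup>L M (\<lambda>\<omega>. cmod (Psi (H \<omega>) t))"
proof (rule integral_cong_AE)
  show "(\<lambda>\<omega>. cmod (complex_cond_exp M F
          (\<lambda>x. exp (\<i> * complex_of_real t * (if Q x then 1 else 0))) \<omega>)) \<in> borel_measurable M"
    unfolding complex_cond_exp_def complex_norm by measurable
  show "(\<lambda>\<omega>. cmod (Psi (H \<omega>) t)) \<in> borel_measurable M"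
    unfolding Psi_def by measurable
  from complex_cond_exp_exp_indicator[OF assms(1), of t] H
  show "AE \<omega> in M. cmod (complex_cond_exp M F
          (\<lambda>x. exp (\<i> * complex_of_real t * (if Q x then 1 else 0))) \<omega>) = cmod (Psi (H \<omega>) t)"
    by eventually_elim simp
qed

lemma (in finite_measure_subalgebra) integral_cond_prob:
  assumes "A \<in> sets M" and "H \<in> borel_measurable M"
    and "AE \<omega> in M. H \<omega> = real_cond_exp M F (indicator A) \<omega>"
  shows "integral\<^sup>L M H = measure M A"
proof -
  have "integral\<^sup>L M H = integral\<^sup>L M (real_cond_exp M F (indicator A))"
    using assms(2,3) by (intro integral_cong_AE) auto
  also have "\<dots> = integral\<^sup>L M (indicator A :: 'a \<Rightarrow> real)"
    using assms(1) by (intro real_cond_exp_int(2) integrable_indicator_finite)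
  finally show ?thesis using assms(1) by simp
qed

lemma (in finite_measure) measure_upper_tail_tendsto:
  assumes [measurable]: "Z \<in> borel_measurable M"
  shows "(\<lambda>n. measure M {\<omega>\<in>space M. c - 1 / Suc n < Z \<omega>})
           \<longlonglongrightarrow> measure M {\<omega>\<in>space M. c \<le> Z \<omega>}"
proof -
  define A where "A n = {\<omega>\<in>space M. c - 1 / Suc n < Z \<omega>}" for n :: nat
  have "decseq A"
  proof (rule decseq_SucI)
    fix n
    have "1 / Suc (Suc n) \<le> 1 / Suc n" by (simp add: frac_le)
    then show "A (Suc n) \<subseteq> A n" unfolding A_def by force
  qed
  moreover have "(\<Inter>n. A n) = {\<omega>\<in>space M. c \<le> Z \<omega>}"
  proof (intro set_eqI iffI)
    fix \<omega> assume \<omega>: "\<omega> \<in> (\<Inter>n. A n)"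
    have "c \<le> Z \<omega>"
    proof (rule field_le_epsilon)
      fix e :: real assume "0 < e"
      then obtain n where "inverse (real (Suc n)) < e" using reals_Archimedean by blast
      moreover have "c - 1 / Suc n < Z \<omega>" using \<omega> by (auto simp: A_def)
      ultimately show "c \<le> Z \<omega> + e" by (simp add: inverse_eq_divide)
    qed
    then show "\<omega> \<in> {\<omega>\<in>space M. c \<le> Z \<omega>}" using \<omega> by (auto simp: A_def)
  qed (auto simp: A_def intro: order.strict_trans2[of _ c])
  moreover have "range A \<subseteq> sets M" unfolding A_def by auto
  ultimately show ?thesis
    using finite_Lim_measure_decseq[of A] unfolding A_def by auto
qed

(* A [0, 1]-valued variable Z whose mean exceeds P(Z = 1) puts the excess mass, up to any
   error 2 eta, into a band [a, 1 - a] with a < eta: split E Z into the contributions of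
   {Z < a}, the band, and {Z > 1 - a}, the last being close to P(Z = 1) for small a. *)
lemma (in prob_space) mass_away_from_endpoints:
  assumes [measurable]: "Z \<in> borel_measurable M"
    and unit: "\<And>\<omega>. \<omega> \<in> space M \<Longrightarrow> 0 \<le> Z \<omega> \<and> Z \<omega> \<le> 1"
    and "0 < \<eta>"
  obtains a where "0 < a" and "a < \<eta>" and
    "expectation Z - prob {\<omega>\<in>space M. Z \<omega> = 1} - 2 * \<eta> < prob {\<omega>\<in>space M. a \<le> Z \<omega> \<and> Z \<omega> \<le> 1 - a}"
proof -
  define g where "g = prob {\<omega>\<in>space M. Z \<omega> = 1}"
  have "{\<omega>\<in>space M. 1 \<le> Z \<omega>} = {\<omega>\<in>space M. Z \<omega> = 1}" using unit by force
  then have "(\<lambda>n. prob {\<omega>\<in>space M. 1 - 1 / Suc n < Z \<omega>}) \<longlonglongrightarrow> g"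
    using measure_upper_tail_tendsto[of Z 1] unfolding g_def by simp
  then obtain N1 where N1: "\<And>n. n \<ge> N1 \<Longrightarrow> prob {\<omega>\<in>space M. 1 - 1 / Suc n < Z \<omega>} < g + \<eta>"
    using order_tendstoD(2)[of _ g sequentially "g + \<eta>"] \<open>0 < \<eta>\<close> by (auto simp: eventually_sequentially)
  obtain N2 where N2: "inverse (real (Suc N2)) < \<eta>" using reals_Archimedean \<open>0 < \<eta>\<close> by blast
  define a where "a = 1 / Suc (max N1 N2)"
  define mid where "mid = {\<omega>\<in>space M. a \<le> Z \<omega> \<and> Z \<omega> \<le> 1 - a}"
  define tail where "tail = {\<omega>\<in>space M. 1 - a < Z \<omega>}"
  have "a \<le> 1 / Suc N2" unfolding a_def by (simp add: frac_le)
  then have a: "0 < a" "a < \<eta>" using N2 by (auto simp: a_def inverse_eq_divide)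
  have tail: "prob tail < g + \<eta>" using N1[of "max N1 N2"] by (simp add: tail_def a_def)
  have [measurable]: "mid \<in> sets M" "tail \<in> sets M" unfolding mid_def tail_def by measurable
  have "expectation Z \<le> expectation (\<lambda>\<omega>. a + indicator mid \<omega> + indicator tail \<omega>)"
  proof (rule integral_mono)
    show "integrable M Z" using unit by (intro integrable_const_bound[where B=1]) auto
    show "integrable M (\<lambda>\<omega>. a + indicator mid \<omega> + indicator tail \<omega>)"
      by (simp add: integrable_indicator_finite)
    show "Z \<omega> \<le> a + indicator mid \<omega> + indicator tail \<omega>" if "\<omega> \<in> space M" for \<omega>
      using unit[OF that] a that by (auto simp: mid_def tail_def indicator_def)
  qed
  also have "\<dots> = a + prob mid + prob tail" by (simp add: integrable_indicator_finite prob_space)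
  finally show ?thesis using that a tail unfolding g_def mid_def by auto
qed

lemma (in prob_space) middle_mass_sandwich:
  assumes [measurable]: "L \<in> borel_measurable M" "Z \<in> borel_measurable M" "U \<in> borel_measurable M"
    and "integrable M L" and "integrable M U"
    and order: "\<And>\<omega>. \<omega> \<in> space M \<Longrightarrow> L \<omega> \<le> Z \<omega> \<and> Z \<omega> \<le> U \<omega>"
    and "0 < \<epsilon>"
  shows "prob {\<omega>\<in>space M. 2 * \<epsilon> \<le> Z \<omega> \<and> Z \<omega> \<le> 1 - 2 * \<epsilon>}
           \<le> prob {\<omega>\<in>space M. \<epsilon> \<le> L \<omega> \<and> U \<omega> \<le> 1 - \<epsilon>} + (expectation U - expectation L) / \<epsilon>"
proof -
  define mid where "mid = {\<omega>\<in>space M. 2 * \<epsilon> \<le> Z \<omega> \<and> Z \<omega> \<le> 1 - 2 * \<epsilon>}"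
  define T where "T = {\<omega>\<in>space M. \<epsilon> \<le> L \<omega> \<and> U \<omega> \<le> 1 - \<epsilon>}"
  have [measurable]: "mid \<in> sets M" "T \<in> sets M" unfolding mid_def T_def by measurable
  have "prob mid = expectation (indicator mid)" by simp
  also have "\<dots> \<le> expectation (\<lambda>\<omega>. indicator T \<omega> + (U \<omega> - L \<omega>) / \<epsilon>)"
  proof (rule integral_mono)
    show "integrable M (\<lambda>\<omega>. indicator T \<omega> + (U \<omega> - L \<omega>) / \<epsilon>)"
      using assms(4,5) by (auto simp: integrable_indicator_finite)
    fix \<omega> assume \<omega>: "\<omega> \<in> space M"
    (* outside T but inside the band, the gap U - L is at least eps *)
    have "\<epsilon> \<le> U \<omega> - L \<omega>" if "\<omega> \<in> mid" "\<omega> \<notin> T"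
      using that order[OF \<omega>] by (auto simp: mid_def T_def)
    moreover have "0 \<le> (U \<omega> - L \<omega>) / \<epsilon>" using order[OF \<omega>] \<open>0 < \<epsilon>\<close> by simp
    ultimately show "indicator mid \<omega> \<le> indicator T \<omega> + (U \<omega> - L \<omega>) / \<epsilon>"
      using \<open>0 < \<epsilon>\<close> by (auto simp: indicator_def)
  qed (simp add: integrable_indicator_finite)
  also have "\<dots> = prob T + (expectation U - expectation L) / \<epsilon>"
    using assms(4,5) by (simp add: integrable_indicator_finite)
  finally show ?thesis unfolding mid_def T_def .
qed

(* Mean modulus of Psi at a random level V in [0, 1]: it is at most |Psi_eps(t)| on the event
   {eps <= V <= 1 - eps} and at most 1 elsewhere. *)
lemma (in prob_space) expectation_norm_Psi_le:
  assumes [measurable]: "V \<in> borel_measurable M"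
    and unit: "\<And>\<omega>. \<omega> \<in> space M \<Longrightarrow> 0 \<le> V \<omega> \<and> V \<omega> \<le> 1"
  shows "expectation (\<lambda>\<omega>. cmod (Psi (V \<omega>) t))
           \<le> 1 - (1 - cmod (Psi \<epsilon> t)) * prob {\<omega>\<in>space M. \<epsilon> \<le> V \<omega> \<and> V \<omega> \<le> 1 - \<epsilon>}"
proof -
  define T where "T = {\<omega>\<in>space M. \<epsilon> \<le> V \<omega> \<and> V \<omega> \<le> 1 - \<epsilon>}"
  have [measurable]: "T \<in> sets M" unfolding T_def by measurable
  have [measurable]: "(\<lambda>\<omega>. cmod (Psi (V \<omega>) t)) \<in> borel_measurable M"
    unfolding Psi_def by measurable
  have "expectation (\<lambda>\<omega>. cmod (Psi (V \<omega>) t))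
          \<le> expectation (\<lambda>\<omega>. 1 - (1 - cmod (Psi \<epsilon> t)) * indicator T \<omega>)"
  proof (rule integral_mono)
    show "integrable M (\<lambda>\<omega>. cmod (Psi (V \<omega>) t))"
      using unit by (intro integrable_const_bound[where B=1]) (auto intro!: AE_I2 norm_Psi_le_1)
    fix \<omega> assume \<omega>: "\<omega> \<in> space M"
    show "cmod (Psi (V \<omega>) t) \<le> 1 - (1 - cmod (Psi \<epsilon> t)) * indicator T \<omega>"
      using norm_Psi_mono[of \<epsilon> "V \<omega>" t] norm_Psi_le_1[of "V \<omega>" t] unit[OF \<omega>]
      by (auto simp: T_def indicator_def)
  qed (simp add: integrable_indicator_finite)
  also have "\<dots> = 1 - (1 - cmod (Psi \<epsilon> t)) * prob T"
    by (simp add: integrable_indicator_finite prob_space)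
  finally show ?thesis unfolding T_def .
qed

lemma (in prob_space) uniform_middle_mass:
  fixes G :: "real \<Rightarrow> 'a \<Rightarrow> real" and F :: "real \<Rightarrow> real"
  assumes G_meas [measurable]: "\<And>y. G y \<in> borel_measurable M"
    and unit: "\<And>y \<omega>. \<omega> \<in> space M \<Longrightarrow> 0 \<le> G y \<omega> \<and> G y \<omega> \<le> 1"
    and mono: "\<And>y z \<omega>. \<omega> \<in> space M \<Longrightarrow> y \<le> z \<Longrightarrow> G y \<omega> \<le> G z \<omega>"
    and mean: "\<And>y. expectation (G y) = F y"
    and cont: "isCont F \<xi>"
    and top_mass: "prob {\<omega>\<in>space M. G \<xi> \<omega> = 1} < F \<xi>"
  obtains \<delta> \<epsilon> where "0 < \<delta>" and "\<delta> < 1" and "0 < \<epsilon>" and "\<epsilon> < 1"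
    and "\<And>y. \<bar>y - \<xi>\<bar> \<le> \<delta> \<Longrightarrow> \<delta> \<le> prob {\<omega>\<in>space M. \<epsilon> \<le> G y \<omega> \<and> G y \<omega> \<le> 1 - \<epsilon>}"
proof -
  have int_G: "integrable M (G y)" for y
    using unit by (intro integrable_const_bound[where B=1]) auto
  define \<eta> where "\<eta> = (F \<xi> - prob {\<omega>\<in>space M. G \<xi> \<omega> = 1}) / 4"
  have "0 < \<eta>" using top_mass by (simp add: \<eta>_def)
  then obtain a where a: "0 < a" "a < \<eta>" and band:
      "expectation (G \<xi>) - prob {\<omega>\<in>space M. G \<xi> \<omega> = 1} - 2 * \<eta>
         < prob {\<omega>\<in>space M. a \<le> G \<xi> \<omega> \<and> G \<xi> \<omega> \<le> 1 - a}"
    using mass_away_from_endpoints[OF G_meas unit \<open>0 < \<eta>\<close>] by blast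
  have "expectation (G \<xi>) - prob {\<omega>\<in>space M. G \<xi> \<omega> = 1} = 4 * \<eta>"
    unfolding \<eta>_def mean by simp
  with band have band: "2 * \<eta> < prob {\<omega>\<in>space M. a \<le> G \<xi> \<omega> \<and> G \<xi> \<omega> \<le> 1 - a}"
    by linarith
  define \<epsilon> where "\<epsilon> = a / 2"
  have \<epsilon>: "0 < \<epsilon>" "\<epsilon> < 1"
    using a band prob_le_1[of "{\<omega>\<in>space M. a \<le> G \<xi> \<omega> \<and> G \<xi> \<omega> \<le> 1 - a}"]
    unfolding \<epsilon>_def by linarith+
  obtain \<delta> where \<delta>: "0 < \<delta>" "\<delta> \<le> min \<eta> (1 / 2)"
    and increment: "F (\<xi> + \<delta>) - F (\<xi> - \<delta>) < \<epsilon> * \<eta>"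
    by (rule isCont_small_window_increment[OF cont, of "\<epsilon> * \<eta>" "min \<eta> (1 / 2)"])
       (use \<epsilon> \<open>0 < \<eta>\<close> in auto)
  (* the window [xi - delta, xi + delta] carries little F-mass, so the band survives *)
  have "prob {\<omega>\<in>space M. 2 * \<epsilon> \<le> G \<xi> \<omega> \<and> G \<xi> \<omega> \<le> 1 - 2 * \<epsilon>}
      \<le> prob {\<omega>\<in>space M. \<epsilon> \<le> G (\<xi> - \<delta>) \<omega> \<and> G (\<xi> + \<delta>) \<omega> \<le> 1 - \<epsilon>}
         + (expectation (G (\<xi> + \<delta>)) - expectation (G (\<xi> - \<delta>))) / \<epsilon>"
  proof (rule middle_mass_sandwich)
    show "G (\<xi> - \<delta>) \<omega> \<le> G \<xi> \<omega> \<and> G \<xi> \<omega> \<le> G (\<xi> + \<delta>) \<omega>" if "\<omega> \<in> space M" for \<omega>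
      using mono[OF that, of "\<xi> - \<delta>" \<xi>] mono[OF that, of \<xi> "\<xi> + \<delta>"] \<delta> by simp
  qed (use int_G \<epsilon> in auto)
  moreover have "(F (\<xi> + \<delta>) - F (\<xi> - \<delta>)) / \<epsilon> < \<eta>"
    using increment \<epsilon> by (simp add: divide_less_eq mult.commute)
  ultimately have window: "\<delta> \<le> prob {\<omega>\<in>space M. \<epsilon> \<le> G (\<xi> - \<delta>) \<omega> \<and> G (\<xi> + \<delta>) \<omega> \<le> 1 - \<epsilon>}"
    using band \<delta> unfolding mean \<epsilon>_def by simp
  have "\<delta> \<le> prob {\<omega>\<in>space M. \<epsilon> \<le> G y \<omega> \<and> G y \<omega> \<le> 1 - \<epsilon>}" if "\<bar>y - \<xi>\<bar> \<le> \<delta>" for y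
  proof -
    have "{\<omega>\<in>space M. \<epsilon> \<le> G (\<xi> - \<delta>) \<omega> \<and> G (\<xi> + \<delta>) \<omega> \<le> 1 - \<epsilon>}
            \<subseteq> {\<omega>\<in>space M. \<epsilon> \<le> G y \<omega> \<and> G y \<omega> \<le> 1 - \<epsilon>}"
      using that mono[of _ "\<xi> - \<delta>" y] mono[of _ y "\<xi> + \<delta>"] by fastforce
    then show ?thesis by (intro order.trans[OF window] finite_measure_mono) auto
  qed
  then show ?thesis using that \<delta> \<epsilon> by auto
qed

theorem lemma3p3:
  fixes M :: "'a measure" and C :: "'a measure"
    and X :: "'a \<Rightarrow> real" and G :: "real \<Rightarrow> 'a \<Rightarrow> real"
    and F :: "real \<Rightarrow> real" and p \<xi> :: real
  assumes "prob_space M"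
    and X_meas: "X \<in> borel_measurable M"
    and F_def: "F = cdf (distr M borel X)"
    and p: "0 < p" "p < 1"
    and xi_def: "\<xi> = Inf {x. F x \<ge> p}"
    and F_cont: "isCont F \<xi>"
    and C_sub: "subalgebra M C"
    and G_mono: "\<And>\<omega>. \<omega> \<in> space M \<Longrightarrow> mono (\<lambda>y. G y \<omega>)"
    and G_rcont: "\<And>\<omega> y. \<omega> \<in> space M \<Longrightarrow> continuous (at_right y) (\<lambda>y. G y \<omega>)"
    and G_bot: "\<And>\<omega>. \<omega> \<in> space M \<Longrightarrow> ((\<lambda>y. G y \<omega>) \<longlongrightarrow> 0) at_bot"
    and G_top: "\<And>\<omega>. \<omega> \<in> space M \<Longrightarrow> ((\<lambda>y. G y \<omega>) \<longlongrightarrow> 1) at_top"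
    and G_meas: "\<And>y. G y \<in> borel_measurable C"
    and G_cond: "\<And>y. AE \<omega> in M. G y \<omega> =
                    real_cond_exp M C (indicator {\<omega>\<in>space M. X \<omega> \<le> y}) \<omega>"
    and g_less: "measure M {\<omega>\<in>space M. G \<xi> \<omega> = 1} < p"
  shows "\<exists>\<delta> \<epsilon>. 0 < \<delta> \<and> \<delta> < 1 \<and> 0 < \<epsilon> \<and> \<epsilon> < 1 \<and>
           (\<forall>t::real.
              (SUP y\<in>{y. \<bar>y - \<xi>\<bar> \<le> \<delta>}.
                 integral\<^sup>L M (\<lambda>\<omega>. cmod (complex_cond_exp M C
                    (\<lambda>x. exp (\<i> * complex_of_real t * (if X x \<le> y then 1 else 0))) \<omega>)))
              \<le> 1 - (1 - cmod (Psi \<epsilon> t)) * \<delta>)"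
proof -
  interpret P: prob_space M by fact
  interpret S: finite_measure_subalgebra M C
    using C_sub P.finite_measure_axioms
    by (simp add: finite_measure_subalgebra_def finite_measure_subalgebra_axioms_def)
  have [measurable]: "X \<in> borel_measurable M" by (rule X_meas)
  have G_meas_M [measurable]: "G y \<in> borel_measurable M" for y
    using measurable_from_subalg[OF C_sub G_meas] .
  have G_le: "G y \<omega> \<le> G z \<omega>" if "\<omega> \<in> space M" "y \<le> z" for y z \<omega>
    using monoD[OF G_mono[OF that(1)] that(2)] .
  have G_unit: "0 \<le> G y \<omega> \<and> G y \<omega> \<le> 1" if "\<omega> \<in> space M" for y \<omega>
    using distribution_function_bounds[OF G_mono G_bot G_top, OF that that that] by simp
  have G_mean: "P.expectation (G y) = F y" for y
    unfolding F_def cdf_distr[OF X_meas] using G_cond[of y] by (intro S.integral_cond_prob) auto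
  have "p \<le> F \<xi>"
    unfolding xi_def F_def using p by (intro cdf_at_quantile) auto
  with g_less have top_mass: "P.prob {\<omega>\<in>space M. G \<xi> \<omega> = 1} < F \<xi>" by linarith
  obtain \<delta> \<epsilon> where \<delta>\<epsilon>: "0 < \<delta>" "\<delta> < 1" "0 < \<epsilon>" "\<epsilon> < 1"
    and window: "\<And>y. \<bar>y - \<xi>\<bar> \<le> \<delta> \<Longrightarrow> \<delta> \<le> P.prob {\<omega>\<in>space M. \<epsilon> \<le> G y \<omega> \<and> G y \<omega> \<le> 1 - \<epsilon>}"
    using P.uniform_middle_mass[OF G_meas_M G_unit G_le G_mean F_cont top_mass] by blast
  show ?thesis
  proof (intro exI conjI allI cSUP_least)
    fix t y assume "y \<in> {y. \<bar>y - \<xi>\<bar> \<le> \<delta>}"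
    have "{x\<in>space M. X x \<le> y} \<in> sets M" by measurable
    note char_fun = S.integral_norm_cond_char_indicator[OF this G_meas_M G_cond[of y], of t]
    from \<open>y \<in> _\<close> have "(1 - cmod (Psi \<epsilon> t)) * \<delta>
               \<le> (1 - cmod (Psi \<epsilon> t)) * P.prob {\<omega>\<in>space M. \<epsilon> \<le> G y \<omega> \<and> G y \<omega> \<le> 1 - \<epsilon>}"
      using window norm_Psi_le_1[of \<epsilon> t] \<delta>\<epsilon> by (intro mult_left_mono) auto
    with P.expectation_norm_Psi_le[of "G y" t \<epsilon>] G_unit
    show "integral\<^sup>L M (\<lambda>\<omega>. cmod (complex_cond_exp M C
            (\<lambda>x. exp (\<i> * complex_of_real t * (if X x \<le> y then 1 else 0))) \<omega>))
          \<le> 1 - (1 - cmod (Psi \<epsilon> t)) * \<delta>"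
      unfolding char_fun by simp
  qed (use \<delta>\<epsilon> in \<open>auto intro: exI[of _ \<xi>]\<close>)
qed

end
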